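(* Let $p$ be a prime, let $P > 1$ be a finite abelian $p$-group, and let $G$ be a finite $p'$-group acting faithfully on $P$ via automorphisms. Let $a$ be an integer with $1 \le a \le \log_p(\exp(P))$ and let $\Gamma$ be the set of elements of order $p^a$ in $P$. Then the number $n(G,\Gamma)$ of orbits of $G$ on $\Gamma$ satisfies $n(G,\Gamma) \ge p^{a-1}$.
   Context: A $p'$-group is a finite group whose order is not divisible by $p$. $\exp(P)$ denotes the exponent of $P$. *)

theory Defs
  imports "HOL-Algebra.Algebra" Complex_Main
begin

definition group_exp :: "('a, 'b) monoid_scheme \<Rightarrow> nat" where
  "group_exp G = (LEAST n. 0 < n \<and> (\<forall>x\<in>carrier G. x [^]\<^bsub>G\<^esub> n = \<one>\<^bsub>G\<^esub>))"

end

theory Submission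
  imports Defs "HOL-Number_Theory.Cong"
begin

text \<open>
  Since P is a p-group of exponent at least p^a, it has an element x of order p^a. If some g
  maps x^i to x^j with i coprime to p and i = j mod p, then g sends x to x^k with k = 1 mod p.
  As the order n of g is prime to p, k^n = 1 mod p^a, and lifting with
  (1 + c)^n = 1 + nc mod c^2 upgrades k = 1 mod p to k = 1 mod p^a; so g fixes x and
  x^i = x^j. Hence the p^(a-1) elements x^(1+pi), i < p^(a-1), all of order p^a, lie in
  pairwise distinct orbits.
\<close>

lemma one_plus_power_cong:
  fixes c :: nat
  shows "[(1 + c) ^ m = 1 + m * c] (mod c\<^sup>2)"
proof (induction m)
  case 0
  then show ?case by simp
next
  case (Suc m)
  have "[(1 + c) ^ Suc m = (1 + c) * (1 + m * c)] (mod c\<^sup>2)"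
    unfolding power_Suc by (rule cong_mult[OF cong_refl Suc.IH])
  also have "(1 + c) * (1 + m * c) = 1 + Suc m * c + m * c\<^sup>2"
    by (simp add: algebra_simps power2_eq_square)
  also have "[\<dots> = 1 + Suc m * c] (mod c\<^sup>2)"
    by (simp add: cong_def)
  finally show ?case .
qed

lemma cong_1_if_power_cong_1:
  fixes p k m :: nat
  assumes p: "Factorial_Ring.prime p" and m: "\<not> p dvd m"
    and "[k = 1] (mod p)" and "[k ^ m = 1] (mod p ^ a)"
  shows "[k = 1] (mod p ^ a)"
  using assms(4)
proof (induction a)
  case 0
  then show ?case by simp
next
  case (Suc a)
  show ?case
  proof (cases "a = 0")
    case True
    with assms(3) show ?thesis by simp
  next
    case False
    have "[k ^ m = 1] (mod p ^ a)"
      using Suc.prems by (rule cong_dvd_modulus_nat) (simp add: le_imp_power_dvd)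
    then have "[k = 1] (mod p ^ a)" by (rule Suc.IH)
    moreover have "p ^ a \<noteq> 1" using False prime_gt_1_nat[OF p] by simp
    ultimately obtain t where k: "k = 1 + t * p ^ a" by (metis cong_to_1'_nat)
    define c where "c = t * p ^ a"
    have "p ^ Suc a dvd p ^ a * p ^ a"
      using False le_imp_power_dvd[of "Suc a" "a + a" p] by (simp add: power_add)
    then have "p ^ Suc a dvd c\<^sup>2"
      by (simp add: c_def power2_eq_square mult_dvd_mono dvd_mult2 ac_simps)
    then have "[(1 + c) ^ m = 1 + m * c] (mod p ^ Suc a)"
      using one_plus_power_cong cong_dvd_modulus_nat by blast
    then have "[1 + m * c = 1 + 0] (mod p ^ Suc a)"
      using Suc.prems k c_def by (metis add_0_right cong_sym cong_trans)
    then have "[m * c = 0] (mod p ^ Suc a)"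
      by (rule iffD1[OF cong_add_lcancel_nat])
    then have "p ^ a * p dvd p ^ a * (m * t)"
      by (simp add: cong_0_iff c_def ac_simps)
    then have "p dvd m * t" using prime_gt_0_nat[OF p] by simp
    then obtain s where "t = s * p" using p m by (auto simp: prime_dvd_mult_iff elim: dvdE)
    then have "k = 1 + s * p ^ Suc a" using k by simp
    then show ?thesis unfolding cong_to_1'_nat by blast
  qed
qed

lemma coprime_one_plus_mult_self:
  fixes p i :: nat
  shows "coprime (1 + p * i) p"
proof -
  have "gcd p (i * p + 1) = 1" by (simp only: gcd_add_mult gcd_1_nat)
  then show ?thesis by (simp add: coprime_iff_gcd_eq_1 gcd.commute ac_simps)
qed

lemma (in group) pow_eq_pow_iff_cong:
  assumes "x \<in> carrier G"
  shows "x [^] (i::nat) = x [^] (j::nat) \<longleftrightarrow> [i = j] (mod ord x)"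
proof -
  have "x [^] i = x [^] j \<longleftrightarrow> x [^] int i = x [^] int j"
    by (simp add: int_pow_int)
  also have "\<dots> \<longleftrightarrow> int (ord x) dvd int j - int i"
    by (rule int_pow_eq[OF assms])
  also have "\<dots> \<longleftrightarrow> [i = j] (mod ord x)"
    by (metis cong_iff_dvd_diff cong_int_iff cong_sym_eq)
  finally show ?thesis .
qed

lemma group_exp_le:
  assumes "0 < n" and "\<forall>x\<in>carrier G. x [^]\<^bsub>G\<^esub> n = \<one>\<^bsub>G\<^esub>"
  shows "group_exp G \<le> n"
  unfolding group_exp_def using assms by (intro Least_le) simp

lemma (in group) group_exp_pos:
  assumes "finite (carrier G)"
  shows "0 < group_exp G"
proof -
  have "0 < order G \<and> (\<forall>x\<in>carrier G. x [^] order G = \<one>)"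
    using assms by (simp add: order_gt_0_iff_finite pow_order_eq_1)
  then show ?thesis
    unfolding group_exp_def
    by (rule LeastI2[where P = "\<lambda>n. 0 < n \<and> (\<forall>x\<in>carrier G. x [^] n = \<one>)"]) simp_all
qed

lemma (in group) ex_ord_eq_prime_power:
  assumes fin: "finite (carrier G)" and p: "Factorial_Ring.prime p"
    and "order G = p ^ K" and "p ^ a \<le> group_exp G"
  shows "\<exists>x\<in>carrier G. ord x = p ^ a"
proof -
  have p_gt_1: "1 < p" using p by (rule prime_gt_1_nat)
  have ord_prime_power: "\<exists>j. ord w = p ^ j" if "w \<in> carrier G" for w
    using ord_dvd_group_order[OF that] assms(3) p by (auto simp add: divides_primepow_nat)
  define M where "M = Max (ord ` carrier G)"
  have "M \<in> ord ` carrier G"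
    unfolding M_def using fin by (intro Max_in) auto
  then obtain z where z: "z \<in> carrier G" "ord z = M" by blast
  then obtain c where c: "M = p ^ c" using ord_prime_power by metis
  have "w [^] M = \<one>" if w: "w \<in> carrier G" for w
  proof -
    obtain j where j: "ord w = p ^ j" using ord_prime_power[OF w] by blast
    have "ord w \<le> M" unfolding M_def using fin w by simp
    then have "j \<le> c" using j c p_gt_1 by simp
    then have "ord w dvd M" using j c by (simp add: le_imp_power_dvd)
    then show ?thesis using w pow_eq_id by blast
  qed
  then have "group_exp G \<le> p ^ c" using c p_gt_1 by (intro group_exp_le) simp_all
  with assms(4) have ac: "a \<le> c"
    using p_gt_1 power_le_imp_le_exp le_trans by blast
  have "p ^ c = p ^ (c - a) * p ^ a" using ac by (simp flip: power_add)
  then have "ord (z [^] p ^ (c - a)) = p ^ a"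
    using z c p_gt_1 by (subst ord_pow) simp_all
  then show ?thesis using z(1) by blast
qed

locale action_by_automorphisms = group_action G "carrier P" \<phi> + P: group P
  for G :: "('g, 'd) monoid_scheme" (structure) and P :: "('a, 'c) monoid_scheme"
    and \<phi> :: "'g \<Rightarrow> 'a \<Rightarrow> 'a" +
  assumes action_hom: "g \<in> carrier G \<Longrightarrow> \<phi> g \<in> hom P P"
begin

sublocale G: group G
  using group_hom group_hom.axioms(1) by blast

lemma action_one: "y \<in> carrier P \<Longrightarrow> \<phi> \<one> y = y"
  using id_eq_one by (metis restrict_apply')

lemma action_nat_pow:
  "g \<in> carrier G \<Longrightarrow> y \<in> carrier P \<Longrightarrow> \<phi> g (y [^]\<^bsub>P\<^esub> (n::nat)) = \<phi> g y [^]\<^bsub>P\<^esub> n"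
  using action_hom by (simp add: hom_nat_pow P.is_group)

lemma action_pow_if_power_map:
  assumes g: "g \<in> carrier G" and y: "y \<in> carrier P" and gy: "\<phi> g y = y [^]\<^bsub>P\<^esub> (k::nat)"
  shows "\<phi> (g [^] n) y = y [^]\<^bsub>P\<^esub> (k ^ n)"
proof (induction n)
  case 0
  then show ?case using action_one y by simp
next
  case (Suc n)
  have "\<phi> (g [^] Suc n) y = \<phi> (g [^] n) (\<phi> g y)"
    using g y by (simp add: composition_rule)
  also have "\<dots> = \<phi> (g [^] n) y [^]\<^bsub>P\<^esub> k"
    using g y gy by (simp add: action_nat_pow)
  also have "\<dots> = y [^]\<^bsub>P\<^esub> (k ^ Suc n)"
    using Suc.IH y by (simp add: P.nat_pow_pow mult.commute)
  finally show ?case .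
qed

lemma fixed_if_power_map_cong_1:
  assumes p: "Factorial_Ring.prime p" and p': "\<not> p dvd order G"
    and g: "g \<in> carrier G" and y: "y \<in> carrier P" and ord_y: "P.ord y = p ^ a"
    and gy: "\<phi> g y = y [^]\<^bsub>P\<^esub> k" and k: "[k = 1] (mod p)"
  shows "\<phi> g y = y"
proof -
  have "y [^]\<^bsub>P\<^esub> (k ^ G.ord g) = y [^]\<^bsub>P\<^esub> (1::nat)"
    using action_pow_if_power_map[OF g y gy, of "G.ord g"] g y by (simp add: action_one)
  then have "[k ^ G.ord g = 1] (mod p ^ a)"
    using P.pow_eq_pow_iff_cong[OF y, of "k ^ G.ord g" 1] ord_y by metis
  moreover have "\<not> p dvd G.ord g"
    using G.ord_dvd_group_order[OF g] p' dvd_trans by blast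
  ultimately have "[k = 1] (mod p ^ a)"
    using cong_1_if_power_cong_1 p k by blast
  then have "y [^]\<^bsub>P\<^esub> k = y [^]\<^bsub>P\<^esub> (1::nat)"
    using P.pow_eq_pow_iff_cong[OF y, of k 1] ord_y by metis
  then show ?thesis using gy y by simp
qed

lemma power_eq_if_in_orbit:
  assumes p: "Factorial_Ring.prime p" and p': "\<not> p dvd order G" and "0 < a"
    and x: "x \<in> carrier P" and ord_x: "P.ord x = p ^ a"
    and i: "coprime i p" and ij: "[i = j] (mod p)"
    and orb: "x [^]\<^bsub>P\<^esub> j \<in> orbit G \<phi> (x [^]\<^bsub>P\<^esub> i)"
  shows "x [^]\<^bsub>P\<^esub> i = x [^]\<^bsub>P\<^esub> (j::nat)"
proof -
  obtain g where g: "g \<in> carrier G" and gxi: "\<phi> g (x [^]\<^bsub>P\<^esub> i) = x [^]\<^bsub>P\<^esub> j"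
    using orb by (auto simp: orbit_def)
  have "coprime i (p ^ a)" using i by simp
  then obtain u where u: "[i * u = 1] (mod p ^ a)"
    by (metis One_nat_def cong_solve_coprime_nat)
  have "x [^]\<^bsub>P\<^esub> (i * u) = x [^]\<^bsub>P\<^esub> (1::nat)"
    unfolding P.pow_eq_pow_iff_cong[OF x] ord_x by (fact u)
  then have x_eq: "x = (x [^]\<^bsub>P\<^esub> i) [^]\<^bsub>P\<^esub> u"
    using x by (simp add: P.nat_pow_pow)
  have "\<phi> g x = \<phi> g ((x [^]\<^bsub>P\<^esub> i) [^]\<^bsub>P\<^esub> u)"
    using x_eq by (rule arg_cong)
  also have "\<dots> = \<phi> g (x [^]\<^bsub>P\<^esub> i) [^]\<^bsub>P\<^esub> u"
    using g x by (intro action_nat_pow P.nat_pow_closed)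
  also have "\<dots> = x [^]\<^bsub>P\<^esub> (j * u)"
    using x by (simp add: gxi P.nat_pow_pow)
  finally have "\<phi> g x = x [^]\<^bsub>P\<^esub> (j * u)" .
  moreover have "[j * u = 1] (mod p)"
  proof -
    have "[j * u = i * u] (mod p)" using cong_mult[OF cong_sym[OF ij] cong_refl] .
    also have "[i * u = 1] (mod p)"
      using cong_dvd_modulus_nat[OF u] dvd_power[of a p] \<open>0 < a\<close> by blast
    finally show ?thesis .
  qed
  ultimately have "\<phi> g x = x"
    by (rule fixed_if_power_map_cong_1[OF p p' g x ord_x])
  then have "x [^]\<^bsub>P\<^esub> i = \<phi> g x [^]\<^bsub>P\<^esub> i" by simp
  also have "\<dots> = \<phi> g (x [^]\<^bsub>P\<^esub> i)" using g x by (rule action_nat_pow[symmetric])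
  also have "\<dots> = x [^]\<^bsub>P\<^esub> j" by (rule gxi)
  finally show ?thesis .
qed

lemma inj_on_orbit_pow_one_plus_mult:
  assumes p: "Factorial_Ring.prime p" and p': "\<not> p dvd order G"
    and "0 < a" and x: "x \<in> carrier P" and ord_x: "P.ord x = p ^ a"
  shows "inj_on (\<lambda>i. orbit G \<phi> (x [^]\<^bsub>P\<^esub> (1 + p * i))) {..<p ^ (a - 1)}"
proof (rule inj_onI)
  fix i j
  assume i: "i \<in> {..<p ^ (a - 1)}" and j: "j \<in> {..<p ^ (a - 1)}"
    and "orbit G \<phi> (x [^]\<^bsub>P\<^esub> (1 + p * i)) = orbit G \<phi> (x [^]\<^bsub>P\<^esub> (1 + p * j))"
  then have "x [^]\<^bsub>P\<^esub> (1 + p * j) \<in> orbit G \<phi> (x [^]\<^bsub>P\<^esub> (1 + p * i))"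
    using orbit_refl x by blast
  moreover have "[1 + p * i = 1 + p * j] (mod p)"
    unfolding cong_add_lcancel_nat by (simp add: cong_def)
  ultimately have "x [^]\<^bsub>P\<^esub> (1 + p * i) = x [^]\<^bsub>P\<^esub> (1 + p * j)"
    using power_eq_if_in_orbit[OF p p' \<open>0 < a\<close> x ord_x coprime_one_plus_mult_self] by blast
  then have "[p * i = p * j] (mod p ^ a)"
    unfolding P.pow_eq_pow_iff_cong[OF x] ord_x cong_add_lcancel_nat .
  moreover obtain b where "a = Suc b" using \<open>0 < a\<close> gr0_implies_Suc by blast
  ultimately have "[i = j] (mod p ^ (a - 1))"
    using prime_gt_0_nat[OF p] by (simp add: cong_def flip: mult_mod_right)
  then show "i = j" using i j cong_less_modulus_unique_nat by blast
qed

lemma card_orbits_ord_eq_prime_power_ge: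
  assumes fin: "finite (carrier P)" and p: "Factorial_Ring.prime p" and p': "\<not> p dvd order G"
    and "0 < a" and x: "x \<in> carrier P" and ord_x: "P.ord x = p ^ a"
  shows "p ^ (a - 1) \<le> card (orbits G {y \<in> carrier P. P.ord y = p ^ a} \<phi>)"
proof -
  let ?\<Gamma> = "{y \<in> carrier P. P.ord y = p ^ a}"
  let ?orb = "\<lambda>i. orbit G \<phi> (x [^]\<^bsub>P\<^esub> (1 + p * i))"
  have "x [^]\<^bsub>P\<^esub> (1 + p * i) \<in> ?\<Gamma>" for i
  proof -
    have "coprime (1 + p * i) (P.ord x)"
      using coprime_one_plus_mult_self ord_x by simp
    then have "P.ord (x [^]\<^bsub>P\<^esub> (1 + p * i)) = P.ord x"
      by (rule iffD2[OF P.pow_ord_eq_ord_iff[OF fin x]])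
    then show ?thesis using x ord_x by simp
  qed
  then have "?orb ` {..<p ^ (a - 1)} \<subseteq> orbits G ?\<Gamma> \<phi>"
    unfolding orbits_def by blast
  moreover have "finite (orbits G ?\<Gamma> \<phi>)"
    using fin by (simp add: orbits_def setcompr_eq_image)
  ultimately show ?thesis
    using card_inj_on_le inj_on_orbit_pow_one_plus_mult[OF p p' \<open>0 < a\<close> x ord_x] by fastforce
qed

end

theorem theorem2p4:
  fixes p :: nat and a :: nat
    and P :: "('a, 'c) monoid_scheme" and G :: "('g, 'd) monoid_scheme"
    and \<phi> :: "'g \<Rightarrow> 'a \<Rightarrow> 'a"
  assumes "Factorial_Ring.prime p"
    and "comm_group P" and "finite (carrier P)"
    and "\<exists>k. order P = p ^ k"
    and "carrier P \<noteq> {\<one>\<^bsub>P\<^esub>}"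
    and "group G" and "finite (carrier G)" and "\<not> p dvd order G"
    and "group_action G (carrier P) \<phi>"
    and "\<forall>g\<in>carrier G. \<phi> g \<in> hom P P"
    and "\<forall>g\<in>carrier G. (\<forall>x\<in>carrier P. \<phi> g x = x) \<longrightarrow> g = \<one>\<^bsub>G\<^esub>"
    and "1 \<le> a" and "real a \<le> log (real p) (real (group_exp P))"
  shows "card (orbits G {x \<in> carrier P. group.ord P x = p ^ a} \<phi>) \<ge> p ^ (a - 1)"
proof -
  interpret P: comm_group P by fact
  interpret action_by_automorphisms G P \<phi>
    using assms(9,10)
    by (intro action_by_automorphisms.intro action_by_automorphisms_axioms.intro P.is_group) auto
  have p_gt_1: "1 < p" using assms(1) by (rule prime_gt_1_nat)
  have "real p powr real a \<le> real (group_exp P)"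
    using assms(13) le_log_iff p_gt_1 P.group_exp_pos[OF assms(3)] by simp
  then have "p ^ a \<le> group_exp P"
    using p_gt_1 by (simp add: powr_realpow flip: of_nat_power)
  then obtain x where "x \<in> carrier P" "P.ord x = p ^ a"
    using P.ex_ord_eq_prime_power assms(1,3,4) by blast
  then show ?thesis
    using card_orbits_ord_eq_prime_power_ge assms(1,3,8,12) by simp
qed

end
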